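(* Let $X$ be a real Banach space, $k\in\mathbb N$, and $Y$ a proximinal closed subspace of $X$. Then $Y$ is a $k$-Chebyshev subspace of $X$ if and only if $\dim\big(\{S(X,y^\perp)-x\}\cap Y\big)<k$ for all $y^\perp\in S_{Y^\perp}$ and all $x\in S(X,y^\perp)$.
   Context: For $x^*\in X^*\setminus\{0\}$, $S(X,x^* )=\{x\in S_X:x^*(x)=\|x^*\|\}$, and $S(X,x^* )-x=\{z-x:z\in S(X,x^* )\}$. $Y^\perp=\{x^*\in X^*:x^*|_Y=0\}$ and $S_{Y^\perp}$ its unit sphere. For a set $A$ and $a\in A$, $\dim A=\dim\operatorname{span}(A-a)$. $Y$ is proximinal if $P_Y(x)=\{y\in Y:\|x-y\|=d(x,Y)\}\neq\emptyset$ for all $x\in X$; a proximinal $Y$ is $k$-Chebyshev if $\dim P_Y(x)\le k-1$ for all $x\in X$. *)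

theory Defs
  imports "HOL-Analysis.Analysis" "HOL-Library.Extended_Nat"
begin

text \<open>Elements of the dual space X* are bounded linear functionals X \<Rightarrow> real,
  with dual norm onorm.\<close>

definition face :: "('a::real_normed_vector \<Rightarrow> real) \<Rightarrow> 'a set" where
  "face f = {x \<in> sphere 0 1. f x = onorm f}"

definition annihilator_sphere :: "'a::real_normed_vector set \<Rightarrow> ('a \<Rightarrow> real) set" where
  "annihilator_sphere Y = {f. bounded_linear f \<and> (\<forall>y\<in>Y. f y = 0) \<and> onorm f = 1}"

definition set_dim :: "'a::real_vector set \<Rightarrow> enat" where
  "set_dim A = (let a = (SOME a. a \<in> A); V = span ((\<lambda>z. z - a) ` A) in
     if \<exists>B. finite B \<and> V = span B then enat (dim V) else \<infinity>)"

definition metric_proj :: "'a::real_normed_vector set \<Rightarrow> 'a \<Rightarrow> 'a set" where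
  "metric_proj Y x = {y \<in> Y. norm (x - y) = infdist x Y}"

definition proximinal :: "'a::real_normed_vector set \<Rightarrow> bool" where
  "proximinal Y \<longleftrightarrow> (\<forall>x. metric_proj Y x \<noteq> {})"

text \<open>dim P_Y(x) \<le> k - 1, written as dim P_Y(x) < k (integer dimensions)\<close>
definition k_chebyshev :: "'a::real_normed_vector set \<Rightarrow> nat \<Rightarrow> bool" where
  "k_chebyshev Y k \<longleftrightarrow> proximinal Y \<and> (\<forall>x. set_dim (metric_proj Y x) < enat k)"

end

theory Submission
  imports Defs
begin

(* If f lies in the unit sphere of Y^perp and x in the face S(X,f), then every y \<in> Y satisfies
   1 = f(x - y) \<le> norm (x - y), so d(x,Y) = 1 and P_Y(x) consists of the y \<in> Y with
   x - y \<in> S(X,f); that is, P_Y(x) = -((S(X,f) - x) \<inter> Y), and both sets have the same dimension.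
   Conversely every metric projection arises this way up to an affine change of variables: for
   y0 \<in> P_Y(x) and d = d(x,Y) > 0, a Hahn-Banach functional f \<in> S_{Y^perp} with f(x) = d attains
   its norm at (x - y0)/d, and P_Y(x) is an affine image of P_Y((x - y0)/d).  If d = 0 then
   P_Y(x) = {x}. *)

definition sublinear :: "('a::real_vector \<Rightarrow> real) \<Rightarrow> bool" where
  "sublinear p \<longleftrightarrow> (\<forall>u v. p (u + v) \<le> p u + p v) \<and> (\<forall>t u. 0 \<le> t \<longrightarrow> p (t *\<^sub>R u) = t * p u)"

lemma sublinear_norm: "sublinear norm"
  unfolding sublinear_def by (simp add: norm_triangle_ineq)

lemma sublinear_zero: "sublinear p \<Longrightarrow> p 0 = 0"
  unfolding sublinear_def by (metis mult_zero_left order_refl scaleR_zero_left)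

(* A partial linear functional is represented by its graph, a subspace of 'a \<times> real; this
   avoids carrying a domain and a well-definedness argument. *)

lemma dominated_graph_single_valued:
  assumes "sublinear p" and "subspace G" and dom: "\<And>u a. (u, a) \<in> G \<Longrightarrow> a \<le> p u"
    and "(v, a) \<in> G" and "(v, b) \<in> G"
  shows "a = b"
proof -
  have "(v, a) - (v, b) \<in> G" "(v, b) - (v, a) \<in> G"
    using subspace_diff[OF \<open>subspace G\<close>] assms(4,5) by blast+
  then have "(0, a - b) \<in> G" "(0, b - a) \<in> G"
    by simp_all
  then have "a - b \<le> p 0" "b - a \<le> p 0"
    using dom by blast+
  then show ?thesis
    using sublinear_zero[OF \<open>sublinear p\<close>] by linarith
qed

lemma dominated_graph_extend:
  assumes p: "sublinear p" and "subspace M" and dom: "\<And>u a. (u, a) \<in> M \<Longrightarrow> a \<le> p u"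
  obtains c where "\<And>w b. (w, b) \<in> span (insert (v, c) M) \<Longrightarrow> b \<le> p w"
proof -
  have sub: "p (u + w) \<le> p u + p w" and pos: "0 < r \<Longrightarrow> p (r *\<^sub>R u) = r * p u" for u w r
    using p unfolding sublinear_def by auto
  have key: "a - p (u - v) \<le> p (w + v) - b" if "(u, a) \<in> M" "(w, b) \<in> M" for u a w b
  proof -
    have "a + b \<le> p (u + w)"
      using dom subspace_add[OF \<open>subspace M\<close> that] by simp
    also have "\<dots> \<le> p (u - v) + p (w + v)"
      using sub[of "u - v" "w + v"] by simp
    finally show ?thesis by simp
  qed
  \<comment> \<open>the extension by (v, c) stays dominated iff c separates the families a - p (u - v)
    and p (w + v) - b, which key shows to be possible\<close>
  define L where "L = {a - p (u - v) | u a. (u, a) \<in> M}"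
  define c where "c = Sup L"
  have zM: "(0, 0) \<in> M" using subspace_0[OF \<open>subspace M\<close>] by (simp add: zero_prod_def)
  have bdd: "bdd_above L" unfolding L_def bdd_above_def using key zM by blast
  have c_lower: "a - p (u - v) \<le> c" if "(u, a) \<in> M" for u a
    unfolding c_def by (rule cSup_upper[OF _ bdd]) (use that L_def in blast)
  have c_upper: "c \<le> p (w + v) - b" if "(w, b) \<in> M" for w b
  proof -
    have "L \<noteq> {}" using zM unfolding L_def by blast
    then show ?thesis
      unfolding c_def by (rule cSup_least) (use key that L_def in blast)
  qed
  have "b \<le> p w" if wb: "(w, b) \<in> span (insert (v, c) M)" for w b
  proof -
    obtain t where "(w, b) - t *\<^sub>R (v, c) \<in> span M"
      using wb unfolding span_insert by blast
    moreover have "span M = M" using \<open>subspace M\<close> by simp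
    ultimately have t: "(w - t *\<^sub>R v, b - t * c) \<in> M" by simp
    consider "t = 0" | "t > 0" | "t < 0" by linarith
    then show ?thesis
    proof cases
      case 1
      then show ?thesis using dom t by simp
    next
      case 2
      have "(inverse t *\<^sub>R w - v, inverse t * b - c) \<in> M"
        using subspace_scale[OF \<open>subspace M\<close> t, of "inverse t"] 2
        by (simp add: algebra_simps)
      from c_upper[OF this] have "inverse t * b \<le> p (inverse t *\<^sub>R w)" by simp
      then show ?thesis using pos[of "inverse t" w] 2 by (simp add: field_simps)
    next
      case 3
      have "(inverse (- t) *\<^sub>R w + v, inverse (- t) * b + c) \<in> M"
        using subspace_scale[OF \<open>subspace M\<close> t, of "inverse (- t)"] 3
        by (simp add: algebra_simps)
      from c_lower[OF this] have "inverse (- t) * b \<le> p (inverse (- t) *\<^sub>R w)" by simp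
      then show ?thesis using pos[of "inverse (- t)" w] 3 by (simp add: field_simps)
    qed
  qed
  then show ?thesis by (rule that)
qed

lemma subspace_Union_chain:
  assumes "C \<noteq> {}" and "\<And>X. X \<in> C \<Longrightarrow> subspace X"
    and chain: "\<And>X Y. X \<in> C \<Longrightarrow> Y \<in> C \<Longrightarrow> X \<subseteq> Y \<or> Y \<subseteq> X"
  shows "subspace (\<Union>C)"
  unfolding subspace_def
proof (intro conjI ballI allI)
  show "0 \<in> \<Union>C" using assms(1,2) subspace_0 by blast
  show "c *\<^sub>R x \<in> \<Union>C" if "x \<in> \<Union>C" for c x
    using that assms(2) subspace_scale by blast
  show "x + y \<in> \<Union>C" if xy: "x \<in> \<Union>C" "y \<in> \<Union>C" for x y
  proof -
    obtain X Y where "X \<in> C" "Y \<in> C" "x \<in> X" "y \<in> Y" using xy by blast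
    then show ?thesis using chain[of X Y] assms(2) subspace_add by blast
  qed
qed

theorem sublinear_Hahn_Banach:
  assumes p: "sublinear p" and "subspace G0" and "\<And>u a. (u, a) \<in> G0 \<Longrightarrow> a \<le> p u"
  obtains f where "linear f" and "\<And>v. f v \<le> p v" and "\<And>u a. (u, a) \<in> G0 \<Longrightarrow> f u = a"
proof -
  define \<A> where "\<A> = {G. G0 \<subseteq> G \<and> subspace G \<and> (\<forall>u a. (u, a) \<in> G \<longrightarrow> a \<le> p u)}"
  have "\<exists>M\<in>\<A>. \<forall>G\<in>\<A>. M \<subseteq> G \<longrightarrow> G = M"
  proof (rule subset_Zorn_nonempty)
    show "\<A> \<noteq> {}" using assms unfolding \<A>_def by blast
    show "\<Union>C \<in> \<A>" if "C \<noteq> {}" and "subset.chain \<A> C" for C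
      using that subspace_Union_chain[of C] unfolding subset_chain_def \<A>_def by blast
  qed
  then obtain M where "M \<in> \<A>" and max: "\<And>G. G \<in> \<A> \<Longrightarrow> M \<subseteq> G \<Longrightarrow> G = M"
    by blast
  then have "G0 \<subseteq> M" and M: "subspace M" and dom: "\<And>u a. (u, a) \<in> M \<Longrightarrow> a \<le> p u"
    unfolding \<A>_def by auto
  have total: "\<exists>a. (v, a) \<in> M" for v
  proof -
    obtain c where "\<And>w b. (w, b) \<in> span (insert (v, c) M) \<Longrightarrow> b \<le> p w"
      using dominated_graph_extend[OF p M dom] by blast
    moreover have sub: "M \<subseteq> span (insert (v, c) M)"
      using span_superset[of "insert (v, c) M"] by blast
    ultimately have "span (insert (v, c) M) \<in> \<A>"
      using \<open>G0 \<subseteq> M\<close> unfolding \<A>_def by auto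
    from this sub have "span (insert (v, c) M) = M"
      by (rule max)
    then show ?thesis using span_superset[of "insert (v, c) M"] by blast
  qed
  define f where "f v = (SOME a. (v, a) \<in> M)" for v
  have graph: "(v, f v) \<in> M" for v
    unfolding f_def using total by (rule someI_ex)
  have f_eq: "f v = a" if "(v, a) \<in> M" for v a
    using dominated_graph_single_valued[OF p M dom graph that] .
  show ?thesis
  proof
    show "linear f"
    proof (rule linearI)
      show "f (u + v) = f u + f v" for u v
        using f_eq subspace_add[OF M graph graph] by simp
      show "f (c *\<^sub>R v) = c *\<^sub>R f v" for c v
        using f_eq subspace_scale[OF M graph] by simp
    qed
    show "f v \<le> p v" for v using dom graph .
    show "f u = a" if "(u, a) \<in> G0" for u a using f_eq that \<open>G0 \<subseteq> M\<close> by blast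
  qed
qed

lemma exists_distance_functional:
  fixes Y :: "'a::real_normed_vector set"
  assumes Y: "subspace Y"
  obtains F where "bounded_linear F" and "\<And>v. \<bar>F v\<bar> \<le> norm v"
    and "\<And>y. y \<in> Y \<Longrightarrow> F y = 0" and "F x = infdist x Y"
proof -
  define d where "d = infdist x Y"
  \<comment> \<open>the graph of y + t x \<mapsto> t d on span (insert x Y)\<close>
  define G0 where "G0 = span (insert (x, d) (Y \<times> {0}))"
  have "subspace (Y \<times> {0::real})"
    using Y by (simp add: subspace_Times)
  then have YO: "span (Y \<times> {0::real}) = Y \<times> {0}"
    by simp
  have "b \<le> norm w" if wb: "(w, b) \<in> G0" for w b
  proof -
    obtain t where "(w, b) - t *\<^sub>R (x, d) \<in> span (Y \<times> {0})"
      using wb unfolding G0_def span_insert by blast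
    then have b: "b = t * d" and wY: "w - t *\<^sub>R x \<in> Y"
      using YO by simp_all
    show ?thesis
    proof (cases "t > 0")
      case False
      then have "t * d \<le> 0"
        using infdist_nonneg[of x Y] d_def by (simp add: mult_nonpos_nonneg)
      then show ?thesis
        using b norm_ge_zero[of w] by linarith
    next
      case True
      have "- inverse t *\<^sub>R (w - t *\<^sub>R x) \<in> Y"
        using Y wY by (simp add: subspace_scale subspace_neg)
      then have "d \<le> dist x (- inverse t *\<^sub>R (w - t *\<^sub>R x))"
        unfolding d_def by (rule infdist_le)
      also have "\<dots> = inverse t * norm w"
        using True by (simp add: dist_norm algebra_simps)
      finally show ?thesis
        using b True by (simp add: field_simps)
    qed
  qed
  then obtain F where F: "linear F" and le: "\<And>v. F v \<le> norm v"
    and FG: "\<And>u a. (u, a) \<in> G0 \<Longrightarrow> F u = a"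
    using sublinear_Hahn_Banach[OF sublinear_norm] unfolding G0_def by blast
  have abs_le: "\<bar>F v\<bar> \<le> norm v" for v
    using le[of v] le[of "- v"] linear_neg[OF F, of v] by simp
  show ?thesis
  proof
    show "bounded_linear F"
      using F abs_le by (intro bounded_linear_intro[of F 1]) (auto simp: linear_add linear_scale)
    show "\<bar>F v\<bar> \<le> norm v" for v by (rule abs_le)
    show "F y = 0" if "y \<in> Y" for y
      using that by (intro FG) (auto simp: G0_def intro: span_base)
    show "F x = infdist x Y"
      unfolding d_def[symmetric] by (intro FG) (auto simp: G0_def intro: span_base)
  qed
qed

lemma metric_proj_iff:
  assumes "Y \<noteq> {}"
  shows "y \<in> metric_proj Y x \<longleftrightarrow> y \<in> Y \<and> (\<forall>z\<in>Y. norm (x - y) \<le> norm (x - z))"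
proof
  assume "y \<in> metric_proj Y x"
  then show "y \<in> Y \<and> (\<forall>z\<in>Y. norm (x - y) \<le> norm (x - z))"
    unfolding metric_proj_def using infdist_le by (fastforce simp: dist_norm)
next
  assume y: "y \<in> Y \<and> (\<forall>z\<in>Y. norm (x - y) \<le> norm (x - z))"
  then have "infdist x Y \<le> norm (x - y)"
    using infdist_le[of y Y x] by (simp add: dist_norm)
  moreover have "norm (x - y) \<le> infdist x Y"
    unfolding infdist_notempty[OF assms] using assms y by (auto intro!: cINF_greatest simp: dist_norm)
  ultimately show "y \<in> metric_proj Y x"
    unfolding metric_proj_def using y by simp
qed

lemma metric_proj_affine_image_subset:
  assumes Y: "subspace Y" and "b \<in> Y" and "c \<noteq> 0"
  shows "(\<lambda>y. c *\<^sub>R y + b) ` metric_proj Y x \<subseteq> metric_proj Y (c *\<^sub>R x + b)"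
proof
  have Y0: "Y \<noteq> {}" using subspace_0[OF Y] by blast
  have dist_eq: "norm ((c *\<^sub>R x + b) - (c *\<^sub>R z + b)) = \<bar>c\<bar> * norm (x - z)" for z
    by (metis add_diff_cancel_right norm_scaleR scaleR_right_diff_distrib)
  fix y' assume "y' \<in> (\<lambda>y. c *\<^sub>R y + b) ` metric_proj Y x"
  then obtain y where y: "y \<in> Y" "\<And>z. z \<in> Y \<Longrightarrow> norm (x - y) \<le> norm (x - z)" and y': "y' = c *\<^sub>R y + b"
    using metric_proj_iff[OF Y0] by blast
  have "norm ((c *\<^sub>R x + b) - y') \<le> norm ((c *\<^sub>R x + b) - z)" if "z \<in> Y" for z
  proof -
    have "inverse c *\<^sub>R (z - b) \<in> Y"
      using Y \<open>b \<in> Y\<close> that by (simp add: subspace_diff subspace_scale)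
    moreover have "z = c *\<^sub>R (inverse c *\<^sub>R (z - b)) + b"
      using \<open>c \<noteq> 0\<close> by simp
    ultimately show ?thesis
      unfolding y' using y(2) dist_eq by (metis abs_ge_zero mult_left_mono)
  qed
  moreover have "y' \<in> Y"
    unfolding y' using Y \<open>b \<in> Y\<close> y(1) by (simp add: subspace_add subspace_scale)
  ultimately show "y' \<in> metric_proj Y (c *\<^sub>R x + b)"
    using metric_proj_iff[OF Y0] by blast
qed

lemma metric_proj_affine_image:
  assumes Y: "subspace Y" and "b \<in> Y" and "c \<noteq> 0"
  shows "metric_proj Y (c *\<^sub>R x + b) = (\<lambda>y. c *\<^sub>R y + b) ` metric_proj Y x"
proof
  show "(\<lambda>y. c *\<^sub>R y + b) ` metric_proj Y x \<subseteq> metric_proj Y (c *\<^sub>R x + b)"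
    using assms by (rule metric_proj_affine_image_subset)
  have "- inverse c *\<^sub>R b \<in> Y"
    using Y \<open>b \<in> Y\<close> by (simp add: subspace_neg subspace_scale)
  moreover have "inverse c \<noteq> 0" using \<open>c \<noteq> 0\<close> by simp
  ultimately have "(\<lambda>y. inverse c *\<^sub>R y - inverse c *\<^sub>R b) ` metric_proj Y (c *\<^sub>R x + b) \<subseteq> metric_proj Y x"
    using metric_proj_affine_image_subset[OF Y, of "- inverse c *\<^sub>R b" "inverse c" "c *\<^sub>R x + b"] \<open>c \<noteq> 0\<close>
    by (simp add: algebra_simps)
  then show "metric_proj Y (c *\<^sub>R x + b) \<subseteq> (\<lambda>y. c *\<^sub>R y + b) ` metric_proj Y x"
    using \<open>c \<noteq> 0\<close> by (force simp: image_subset_iff algebra_simps)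
qed

lemma metric_proj_face:
  fixes Y :: "'a::real_normed_vector set"
  assumes Y: "subspace Y" and f: "f \<in> annihilator_sphere Y" and x: "x \<in> face f"
  shows "metric_proj Y x = uminus ` (((\<lambda>z. z - x) ` face f) \<inter> Y)"
proof -
  have bl: "bounded_linear f" and fY: "\<And>y. y \<in> Y \<Longrightarrow> f y = 0" and on: "onorm f = 1"
    using f unfolding annihilator_sphere_def by auto
  have nx: "norm x = 1" and fx: "f x = 1"
    using x on unfolding face_def by auto
  have f_diff: "f (x - y) = 1" if "y \<in> Y" for y
    using fx fY[OF that] linear_diff[OF bounded_linear.linear[OF bl]] by simp
  have ge: "1 \<le> norm (x - y)" if "y \<in> Y" for y
    using onorm[OF bl, of "x - y"] f_diff[OF that] on by simp
  have Y0: "0 \<in> Y" using subspace_0[OF Y] .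
  have proj_iff: "y \<in> metric_proj Y x \<longleftrightarrow> y \<in> Y \<and> norm (x - y) = 1" for y
  proof -
    have "y \<in> metric_proj Y x \<longleftrightarrow> y \<in> Y \<and> (\<forall>z\<in>Y. norm (x - y) \<le> norm (x - z))"
      using Y0 by (intro metric_proj_iff) blast
    also have "\<dots> \<longleftrightarrow> y \<in> Y \<and> norm (x - y) = 1"
      using Y0 ge nx by (metis antisym diff_zero)
    finally show ?thesis .
  qed
  have "metric_proj Y x = {y \<in> Y. x - y \<in> face f}"
    using proj_iff f_diff on unfolding face_def by auto
  also have "\<dots> = uminus ` (((\<lambda>z. z - x) ` face f) \<inter> Y)"
  proof (intro equalityI subsetI)
    fix y assume "y \<in> {y \<in> Y. x - y \<in> face f}"
    moreover have "- y = (x - y) - x" by simp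
    ultimately show "y \<in> uminus ` (((\<lambda>z. z - x) ` face f) \<inter> Y)"
      using subspace_neg[OF Y] by (metis (no_types, lifting) IntI image_eqI mem_Collect_eq minus_minus)
  next
    fix y assume "y \<in> uminus ` (((\<lambda>z. z - x) ` face f) \<inter> Y)"
    then obtain z where "z \<in> face f" "z - x \<in> Y" "y = x - z" by auto
    then show "y \<in> {y \<in> Y. x - y \<in> face f}"
      using subspace_neg[OF Y, of "z - x"] by simp
  qed
  finally show ?thesis .
qed

lemma span_translates_eq:
  assumes "a \<in> A" and "a' \<in> A"
  shows "span ((\<lambda>z. z - a) ` A) = span ((\<lambda>z. z - a') ` A)"
proof -
  have "span ((\<lambda>z. z - a) ` A) \<subseteq> span ((\<lambda>z. z - a') ` A)" if "a \<in> A" "a' \<in> A" for a a'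
  proof (rule span_minimal[OF _ subspace_span], rule image_subsetI)
    fix z assume "z \<in> A"
    then have "(z - a') - (a - a') \<in> span ((\<lambda>z. z - a') ` A)"
      using that by (intro span_diff span_base) auto
    then show "z - a \<in> span ((\<lambda>z. z - a') ` A)" by simp
  qed
  then show ?thesis using assms by blast
qed

lemma set_dim_less_iff:
  fixes A :: "'a::real_vector set"
  assumes "a \<in> A"
  shows "set_dim A < enat k \<longleftrightarrow> (\<exists>B. finite B \<and> card B < k \<and> (\<lambda>z. z - a) ` A \<subseteq> span B)"
proof -
  define V where "V = span ((\<lambda>z. z - a) ` A)"
  have "(SOME a. a \<in> A) \<in> A" using assms by (rule someI)
  then have sd: "set_dim A = (if \<exists>B. finite B \<and> V = span B then enat (dim V) else \<infinity>)"
    unfolding set_dim_def Let_def V_def using span_translates_eq[OF assms] by presburger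
  obtain C where C: "C \<subseteq> V" "independent C" "V \<subseteq> span C" "card C = dim V"
    by (rule basis_exists)
  have VC: "V = span C"
    using C span_minimal[OF C(1)] unfolding V_def by auto
  show ?thesis
  proof
    assume lt: "set_dim A < enat k"
    have fin: "\<exists>B. finite B \<and> V = span B"
      using lt sd by (auto split: if_splits)
    then have "finite C"
      using independent_span_bound[OF _ C(2)] C(1) by blast
    moreover have "dim V < k"
      using lt unfolding sd if_P[OF fin] by simp
    moreover have "(\<lambda>z. z - a) ` A \<subseteq> span C"
      using span_superset[of "(\<lambda>z. z - a) ` A"] VC V_def by simp
    ultimately show "\<exists>B. finite B \<and> card B < k \<and> (\<lambda>z. z - a) ` A \<subseteq> span B"
      using C(4) by (intro exI[of _ C]) simp
  next
    assume "\<exists>B. finite B \<and> card B < k \<and> (\<lambda>z. z - a) ` A \<subseteq> span B"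
    then obtain B where B: "finite B" "card B < k" "(\<lambda>z. z - a) ` A \<subseteq> span B" by blast
    have "V \<subseteq> span B" unfolding V_def using B(3) span_minimal subspace_span by blast
    then have "finite C \<and> card C \<le> card B" using independent_span_bound[OF B(1) C(2)] C(1) by blast
    then show "set_dim A < enat k" using sd VC C(4) B(2) by auto
  qed
qed

lemma set_dim_singleton: "set_dim {a :: 'a::real_vector} = 0"
proof -
  have "span {} = {0 :: 'a}" and "dim {0 :: 'a} = 0"
    using dim_le_card[of "{0 :: 'a}" "{}"] by simp_all
  then show ?thesis
    unfolding set_dim_def Let_def by (auto simp: zero_enat_def)
qed

lemma enat_eqI_less:
  assumes "\<And>k. m < enat k \<longleftrightarrow> n < enat k"
  shows "m = n"
proof (cases m)
  case (enat i)
  then obtain j where j: "n = enat j"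
    using assms[of "Suc i"] by (cases n) auto
  then show ?thesis
    using enat assms[of i] assms[of j] by (simp add: linorder_neq_iff)
next
  case infinity
  show ?thesis
  proof (cases n)
    case (enat j)
    then show ?thesis using assms[of "Suc j"] infinity by simp
  qed (use infinity in simp)
qed

lemma set_dim_affine_image:
  assumes "c \<noteq> 0"
  shows "set_dim ((\<lambda>z. c *\<^sub>R z + b) ` A) = set_dim A"
proof (cases "A = {}")
  case False
  then obtain a where a: "a \<in> A" by blast
  have diff: "(\<lambda>z. z - (c *\<^sub>R a + b)) ` (\<lambda>z. c *\<^sub>R z + b) ` A = (\<lambda>w. c *\<^sub>R w) ` (\<lambda>z. z - a) ` A"
    by (auto simp: image_image algebra_simps)
  have scale_iff: "(\<lambda>w. c *\<^sub>R w) ` S \<subseteq> span B \<longleftrightarrow> S \<subseteq> span B" for S B :: "'a set"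
  proof
    assume "(\<lambda>w. c *\<^sub>R w) ` S \<subseteq> span B"
    then have "inverse c *\<^sub>R (c *\<^sub>R w) \<in> span B" if "w \<in> S" for w
      using that by (blast intro: span_scale)
    then show "S \<subseteq> span B" using assms by auto
  qed (auto intro: span_scale)
  have a': "c *\<^sub>R a + b \<in> (\<lambda>z. c *\<^sub>R z + b) ` A" using a by blast
  show ?thesis
    by (rule enat_eqI_less)
      (simp only: set_dim_less_iff[OF a] set_dim_less_iff[OF a'] diff scale_iff)
qed simp

lemma set_dim_uminus_image: "set_dim (uminus ` A) = set_dim A"
  using set_dim_affine_image[of "-1" 0 A] by simp

lemma exists_norming_annihilator:
  fixes Y :: "'a::real_normed_vector set"
  assumes Y: "subspace Y" and y0: "y0 \<in> metric_proj Y x" and pos: "infdist x Y > 0"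
  obtains F where "F \<in> annihilator_sphere Y" and "(1 / infdist x Y) *\<^sub>R (x - y0) \<in> face F"
proof -
  define d where "d = infdist x Y"
  obtain F where bl: "bounded_linear F" and le: "\<And>v. \<bar>F v\<bar> \<le> norm v"
    and FY: "\<And>y. y \<in> Y \<Longrightarrow> F y = 0" and Fx: "F x = d"
    using exists_distance_functional[OF Y] unfolding d_def by blast
  have y0Y: "y0 \<in> Y" and ny0: "norm (x - y0) = d"
    using y0 unfolding metric_proj_def d_def by auto
  have F_xy0: "F (x - y0) = d"
    using Fx FY[OF y0Y] linear_diff[OF bounded_linear.linear[OF bl]] by simp
  have "onorm F = 1"
  proof (rule antisym)
    show "onorm F \<le> 1"
      using le by (intro onorm_bound) auto
    show "1 \<le> onorm F"
      using le_onorm[OF bl, of "x - y0"] F_xy0 ny0 pos d_def by simp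
  qed
  then have "F \<in> annihilator_sphere Y"
    unfolding annihilator_sphere_def using bl FY by blast
  moreover have "(1 / d) *\<^sub>R (x - y0) \<in> face F"
    unfolding face_def using \<open>onorm F = 1\<close> F_xy0 ny0 pos d_def
      linear_scale[OF bounded_linear.linear[OF bl]] by simp
  ultimately show ?thesis
    using that d_def by blast
qed

lemma set_dim_face_translate_eq_metric_proj:
  assumes "subspace Y" and "f \<in> annihilator_sphere Y" and "x \<in> face f"
  shows "set_dim (((\<lambda>z. z - x) ` face f) \<inter> Y) = set_dim (metric_proj Y x)"
  using metric_proj_face[OF assms] set_dim_uminus_image by metis

lemma exists_face_translate_dim_eq_metric_proj:
  fixes Y :: "'a::real_normed_vector set"
  assumes Y: "subspace Y" and y0: "y0 \<in> metric_proj Y x" and pos: "infdist x Y > 0"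
  obtains F u where "F \<in> annihilator_sphere Y" and "u \<in> face F"
    and "set_dim (metric_proj Y x) = set_dim (((\<lambda>z. z - u) ` face F) \<inter> Y)"
proof -
  define d where "d = infdist x Y"
  obtain F where F: "F \<in> annihilator_sphere Y" and u: "(1 / d) *\<^sub>R (x - y0) \<in> face F"
    using exists_norming_annihilator[OF Y y0 pos] d_def by blast
  define b where "b = - (1 / d) *\<^sub>R y0"
  have "b \<in> Y"
    using Y y0 unfolding metric_proj_def b_def by (simp add: subspace_neg subspace_scale)
  have "1 / d \<noteq> 0" using pos d_def by simp
  then have "set_dim (metric_proj Y x) = set_dim (metric_proj Y ((1 / d) *\<^sub>R x + b))"
    by (simp add: metric_proj_affine_image[OF Y \<open>b \<in> Y\<close>] set_dim_affine_image)
  also have "(1 / d) *\<^sub>R x + b = (1 / d) *\<^sub>R (x - y0)"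
    unfolding b_def by (simp add: algebra_simps)
  also have "set_dim (metric_proj Y \<dots>) = set_dim (((\<lambda>z. z - (1 / d) *\<^sub>R (x - y0)) ` face F) \<inter> Y)"
    using set_dim_face_translate_eq_metric_proj[OF Y F u] by simp
  finally show ?thesis
    by (rule that[OF F u])
qed

theorem theorem4p4:
  fixes Y :: "'a::banach set" and k :: nat
  assumes "k \<ge> 1" and "subspace Y" and "closed Y" and "proximinal Y"
  shows "k_chebyshev Y k \<longleftrightarrow>
    (\<forall>f \<in> annihilator_sphere Y. \<forall>x \<in> face f.
        set_dim (((\<lambda>z. z - x) ` face f) \<inter> Y) < enat k)"
proof
  assume "k_chebyshev Y k"
  then show "\<forall>f \<in> annihilator_sphere Y. \<forall>x \<in> face f. set_dim (((\<lambda>z. z - x) ` face f) \<inter> Y) < enat k"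
    unfolding k_chebyshev_def using set_dim_face_translate_eq_metric_proj[OF assms(2)] by simp
next
  assume faces: "\<forall>f \<in> annihilator_sphere Y. \<forall>x \<in> face f. set_dim (((\<lambda>z. z - x) ` face f) \<inter> Y) < enat k"
  have "set_dim (metric_proj Y x) < enat k" for x
  proof -
    obtain y0 where y0: "y0 \<in> metric_proj Y x"
      using assms(4) unfolding proximinal_def by blast
    show ?thesis
    proof (cases "infdist x Y = 0")
      case True
      then have "metric_proj Y x = {x}"
        using y0 unfolding metric_proj_def by auto
      then show ?thesis
        using assms(1) by (simp add: set_dim_singleton zero_enat_def)
    next
      case False
      then have "infdist x Y > 0"
        using infdist_nonneg[of x Y] by simp
      then obtain F u where "F \<in> annihilator_sphere Y" "u \<in> face F"
        "set_dim (metric_proj Y x) = set_dim (((\<lambda>z. z - u) ` face F) \<inter> Y)"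
        by (rule exists_face_translate_dim_eq_metric_proj[OF assms(2) y0])
      then show ?thesis
        using faces by simp
    qed
  qed
  then show "k_chebyshev Y k"
    using assms(4) unfolding k_chebyshev_def by blast
qed

end
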